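(* Let $V,U\subset\mathbf{R}^n$ be domains and $\psi:V\to U$ a $C^1$-diffeomorphism with $\|\nabla\psi\|_{L^\infty(V)}+\|\nabla\psi^{-1}\|_{L^\infty(U)}<\infty$. Let $\rho>0$ and let $V_\rho\subset V$, $U_\rho\subset U$ be bounded subdomains with $\psi(V_\rho)=U_\rho$. Set $K_*:=\max\{1,\|\nabla\psi\|_{L^\infty(V)}+\|\nabla\psi^{-1}\|_{L^\infty(U)}\}$ and suppose there are $c_0>0$ and $\eta_0\in V_\rho$ with, for $x_0=\psi(\eta_0)$, $V_\rho\subset B_{c_0\rho}(\eta_0)\subset B_{K_*(c_0+3)\rho}(\eta_0)\subset V$ and $U_\rho\subset B_{c_0\rho}(x_0)\subset B_{K_*(c_0+3)\rho}(x_0)\subset U$. Then there is a constant $C_\rho$ (independent of $f$) such that for every $f\in bmo(\mathbf{R}^n)$ with $\operatorname{supp}f\subset V_\rho$, the function $f\circ\psi^{-1}$ (extended by $0$ outside $U_\rho$) belongs to $bmo(\mathbf{R}^n)$ and $\|f\circ\psi^{-1}\|_{bmo(\mathbf{R}^n)}\le C_\rho\|f\|_{bmo(\mathbf{R}^n)}$.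
   Context: $[f]_{BMO(\mathbf{R}^n)}:=\sup_B|B|^{-1}\int_B|f-f_B|$ over balls $B\subset\mathbf{R}^n$. $L^1_{\mathrm{ul}}(\mathbf{R}^n):=\{f\in L^1_{\mathrm{loc}}: \|f\|_{L^1_{\mathrm{ul}}}:=\sup_{x}\int_{B_1(x)}|f|<\infty\}$; $bmo(\mathbf{R}^n):=BMO(\mathbf{R}^n)\cap L^1_{\mathrm{ul}}(\mathbf{R}^n)$ with norm $\|f\|_{bmo(\mathbf{R}^n)}:=[f]_{BMO(\mathbf{R}^n)}+\|f\|_{L^1_{\mathrm{ul}}(\mathbf{R}^n)}$. *)

theory Defs
  imports "HOL-Analysis.Analysis"
begin

definition ball_avg :: "('a::euclidean_space \<Rightarrow> real) \<Rightarrow> 'a \<Rightarrow> real \<Rightarrow> real" where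
  "ball_avg f x r = (\<integral>y\<in>ball x r. f y \<partial>lebesgue) / measure lebesgue (ball x r)"

definition ball_osc :: "('a::euclidean_space \<Rightarrow> real) \<Rightarrow> 'a \<Rightarrow> real \<Rightarrow> real" where
  "ball_osc f x r = (\<integral>y\<in>ball x r. \<bar>f y - ball_avg f x r\<bar> \<partial>lebesgue) / measure lebesgue (ball x r)"

definition locally_integrable :: "('a::euclidean_space \<Rightarrow> real) \<Rightarrow> bool" where
  "locally_integrable f \<longleftrightarrow> (\<forall>x r. set_integrable lebesgue (ball x r) f)"

definition BMO_seminorm :: "('a::euclidean_space \<Rightarrow> real) \<Rightarrow> real" where
  "BMO_seminorm f = (SUP p\<in>{(x, r). r > 0}. ball_osc f (fst p) (snd p))"

definition L1ul_norm :: "('a::euclidean_space \<Rightarrow> real) \<Rightarrow> real" where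
  "L1ul_norm f = (SUP x. \<integral>y\<in>ball x 1. \<bar>f y\<bar> \<partial>lebesgue)"

definition in_bmo :: "('a::euclidean_space \<Rightarrow> real) \<Rightarrow> bool" where
  "in_bmo f \<longleftrightarrow> locally_integrable f
      \<and> bdd_above ((\<lambda>p. ball_osc f (fst p) (snd p)) ` {(x, r). r > 0})
      \<and> bdd_above ((\<lambda>x. \<integral>y\<in>ball x 1. \<bar>f y\<bar> \<partial>lebesgue) ` UNIV)"

definition bmo_norm :: "('a::euclidean_space \<Rightarrow> real) \<Rightarrow> real" where
  "bmo_norm f = BMO_seminorm f + L1ul_norm f"

definition is_domain :: "'a::euclidean_space set \<Rightarrow> bool" where
  "is_domain S \<longleftrightarrow> open S \<and> connected S \<and> S \<noteq> {}"

end

theory Submission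
  imports Defs
begin

text \<open>Let g be f \<circ> \<phi> on U\<rho>, extended by zero. A ball of radius r \<le> \<rho> that meets U\<rho> lies
  in a region where \<phi> and its inverse \<psi> are K-Lipschitz, so \<phi> maps it into the ball of radius
  K r around the image of its centre and distorts Lebesgue measure by at most K^n in either
  direction; comparing with the mean of f on that ball bounds the oscillation of g by 2 K^(2n)
  times that of f. A ball of radius r > \<rho>, and the uniformly local L^1 norm, are controlled by
  the total L^1 norm of g, which is at most K^n times the integral of |f| over a fixed bounded set,
  hence a multiple of the uniformly local L^1 norm of f. The measure distortion of a Lipschitz
  map comes from the Vitali covering theorem.\<close>

lemma lipschitz_image_negligible:
  fixes f :: "'m::euclidean_space \<Rightarrow> 'n::euclidean_space"
  assumes "DIM('m) \<le> DIM('n)" "B-lipschitz_on S f" "N \<subseteq> S" "negligible N"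
  shows "negligible (f ` N)"
proof (rule negligible_locally_Lipschitz_image[OF assms(1,4)])
  fix x assume "x \<in> N"
  have "\<forall>y\<in>N. norm (f y - f x) \<le> B * norm (y - x)"
    using assms(2,3) \<open>x \<in> N\<close> by (auto intro: lipschitz_on_normD)
  then show "\<exists>U L. open U \<and> x \<in> U \<and> (\<forall>y\<in>N \<inter> U. norm (f y - f x) \<le> L * norm (y - x))"
    by (intro exI[of _ UNIV] exI[of _ B]) auto
qed

lemma lipschitz_image_in_sets_lebesgue:
  fixes f :: "'m::euclidean_space \<Rightarrow> 'n::euclidean_space"
  assumes "DIM('m) \<le> DIM('n)" and lip: "B-lipschitz_on S f"
    and T: "T \<subseteq> S" "T \<in> sets lebesgue"
  shows "f ` T \<in> sets lebesgue"
proof (rule sets_lebesgue_continuous_image[OF T(2) _ _ T(1)])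
  show "continuous_on S f"
    using lip by (rule lipschitz_on_continuous_on)
  show "negligible (f ` N)" if "negligible N" "N \<subseteq> S" for N
    using assms(1) lip that(2,1) by (rule lipschitz_image_negligible)
qed

lemma measure_cball_scale:
  fixes x :: "'a::euclidean_space"
  assumes "0 \<le> r"
  shows "measure lebesgue (cball x r) = r ^ DIM('a) * measure lebesgue (ball (0::'a) 1)"
  using content_ball_conv_unit_ball[OF assms, of x] content_cball_conv_ball[of x r] by simp

text \<open>Vitali: almost all of S is covered by disjoint balls inside T; the Lipschitz images of
  the balls are balls B times larger, and the image of the rest is negligible.\<close>
lemma lipschitz_image_measure_le_open:
  fixes f :: "'a::euclidean_space \<Rightarrow> 'a"
  assumes T: "open T" "T \<in> lmeasurable" and lip: "B-lipschitz_on T f"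
    and S: "S \<subseteq> T" "f ` S \<in> sets lebesgue"
  shows "f ` S \<in> lmeasurable \<and> measure lebesgue (f ` S) \<le> B ^ DIM('a) * measure lebesgue T"
proof -
  define K where "K = {(x, r). x \<in> S \<and> 0 < r \<and> ball x r \<subseteq> T}"
  have fine: "\<exists>i. i \<in> K \<and> x \<in> ball (fst i) (snd i) \<and> snd i < d" if "x \<in> S" "0 < d" for x d
  proof -
    obtain e where "0 < e" "ball x e \<subseteq> T"
      using T(1) S(1) \<open>x \<in> S\<close> by (meson openE subsetD)
    then show ?thesis
      using that by (intro exI[of _ "(x, min e (d/2))"]) (auto simp: K_def)
  qed
  obtain C where C: "countable C" "C \<subseteq> K"
    and disj: "pairwise (\<lambda>i j. disjnt (ball (fst i) (snd i)) (ball (fst j) (snd j))) C"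
    and negl: "negligible (S - (\<Union>i\<in>C. ball (fst i) (snd i)))"
    using Vitali_covering_theorem_balls[of S K fst snd, OF fine] by blast
  define Y where "Y = (\<Union>i\<in>C. cball (f (fst i)) (B * snd i))"
  have B: "0 \<le> B" using lip by (rule lipschitz_on_nonneg)
  have ball_T: "ball (fst i) (snd i) \<subseteq> T" "fst i \<in> S" "0 < snd i" if "i \<in> C" for i
    using that C(2) unfolding K_def by (force, force, force)
  have "f ` S \<subseteq> f ` (S - (\<Union>i\<in>C. ball (fst i) (snd i))) \<union> Y"
  proof
    fix y assume "y \<in> f ` S"
    then obtain z where z: "z \<in> S" "y = f z" by blast
    show "y \<in> f ` (S - (\<Union>i\<in>C. ball (fst i) (snd i))) \<union> Y"
    proof (cases "\<exists>i\<in>C. z \<in> ball (fst i) (snd i)")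
      case True
      then obtain i where i: "i \<in> C" "z \<in> ball (fst i) (snd i)" by blast
      have "dist (f (fst i)) (f z) \<le> B * dist (fst i) z"
        using ball_T[OF i(1)] S(1) i(2) by (intro lipschitz_onD[OF lip]) auto
      also have "\<dots> \<le> B * snd i"
        using i(2) B by (intro mult_left_mono) auto
      finally show ?thesis using i z unfolding Y_def by (auto simp: dist_commute)
    qed (use z in auto)
  qed
  moreover have "negligible (f ` (S - (\<Union>i\<in>C. ball (fst i) (snd i))))"
    using lip S(1) negl by (intro lipschitz_image_negligible[of B T]) auto
  moreover have "Y \<in> lmeasurable \<and> measure lebesgue Y \<le> B ^ DIM('a) * measure lebesgue T"
  proof -
    have "measure lebesgue (\<Union>i\<in>I. cball (f (fst i)) (B * snd i)) \<le> B ^ DIM('a) * measure lebesgue T"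
      if "I \<subseteq> C" "finite I" for I
    proof -
      have "measure lebesgue (\<Union>i\<in>I. cball (f (fst i)) (B * snd i))
            \<le> (\<Sum>i\<in>I. measure lebesgue (cball (f (fst i)) (B * snd i)))"
        using that by (intro measure_UNION_le) auto
      also have "\<dots> = B ^ DIM('a) * (\<Sum>i\<in>I. measure lebesgue (ball (fst i) (snd i)))"
      proof (unfold sum_distrib_left, rule sum.cong)
        fix i assume "i \<in> I"
        then have "i \<in> C" using that(1) by blast
        then have "0 \<le> snd i" using ball_T(3) less_imp_le by blast
        then show "measure lebesgue (cball (f (fst i)) (B * snd i))
                   = B ^ DIM('a) * measure lebesgue (ball (fst i) (snd i))"
          using B measure_cball_scale[of "B * snd i" "f (fst i)"]
            content_ball_conv_unit_ball[of "snd i" "fst i"]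
          by (simp add: power_mult_distrib)
      qed simp
      also have "(\<Sum>i\<in>I. measure lebesgue (ball (fst i) (snd i)))
                 = measure lebesgue (\<Union>i\<in>I. ball (fst i) (snd i))"
      proof (rule measure_finite_Union[symmetric])
        show "disjoint_family_on (\<lambda>i. ball (fst i) (snd i)) I"
          using pairwise_subset[OF disj that(1)]
          by (auto simp: disjoint_family_on_def pairwise_def disjnt_def)
        show "emeasure lebesgue (ball (fst i) (snd i)) \<noteq> \<infinity>" for i :: "'a \<times> real"
          using lmeasurable_ball[of "fst i" "snd i"] by (simp add: fmeasurable_def)
      qed (use that in auto)
      also have "\<dots> \<le> measure lebesgue T"
        using that ball_T T(2) by (intro measure_mono_fmeasurable) auto
      finally show ?thesis using B by (simp add: mult_left_mono)
    qed
    then show ?thesis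
      unfolding Y_def
      by (intro conjI fmeasurable_UN_bound[OF C(1)] measure_UN_bound[OF C(1)]) auto
  qed
  ultimately obtain N where N: "negligible N" "f ` S \<subseteq> N \<union> Y"
    and Y: "Y \<in> lmeasurable" "measure lebesgue Y \<le> B ^ DIM('a) * measure lebesgue T"
    by blast
  have NY: "N \<union> Y \<in> lmeasurable"
    using N(1) Y(1) by (auto intro: fmeasurable.Un negligible_imp_measurable)
  have fS: "f ` S \<in> lmeasurable"
    using fmeasurableI2[OF NY N(2) S(2)] .
  have "measure lebesgue (f ` S) \<le> measure lebesgue (N \<union> Y)"
    using N(2) S(2) NY by (rule measure_mono_fmeasurable)
  also have "\<dots> \<le> measure lebesgue N + measure lebesgue Y"
    using N(1) Y(1) by (intro measure_Un_le) (auto intro: negligible_imp_sets)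
  finally show ?thesis
    using fS Y(2) negligible_imp_measure0[OF N(1)] by simp
qed

lemma lipschitz_image_measure_le:
  fixes f :: "'a::euclidean_space \<Rightarrow> 'a"
  assumes W: "open W" and lip: "B-lipschitz_on W f" and S: "S \<in> lmeasurable" "S \<subseteq> W"
  shows "f ` S \<in> lmeasurable \<and> measure lebesgue (f ` S) \<le> B ^ DIM('a) * measure lebesgue S"
proof -
  have fS: "f ` S \<in> sets lebesgue"
    using S by (intro lipschitz_image_in_sets_lebesgue[OF order_refl lip]) auto
  have approx: "f ` S \<in> lmeasurable \<and> measure lebesgue (f ` S) \<le> B ^ DIM('a) * (measure lebesgue S + e)"
    if "0 < e" for e
  proof -
    obtain T where T: "open T" "S \<subseteq> T" "T - S \<in> lmeasurable" "emeasure lebesgue (T - S) < ennreal e"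
      using sets_lebesgue_outer_open[OF fmeasurableD[OF S(1)] \<open>0 < e\<close>] by blast
    have Tm: "T \<in> lmeasurable"
      using S(1) T(2,3) fmeasurable_Diff_D by blast
    have "measure lebesgue (T \<inter> W) \<le> measure lebesgue T"
      using Tm W by (intro measure_mono_fmeasurable) auto
    also have "\<dots> = measure lebesgue S + measure lebesgue (T - S)"
      using measurable_measure_Diff[OF Tm, of S] S(1) T(2) by auto
    also have "\<dots> \<le> measure lebesgue S + e"
      using T(3,4) \<open>0 < e\<close> by (simp add: emeasure_eq_measure2 ennreal_less_iff)
    finally have "measure lebesgue (T \<inter> W) \<le> measure lebesgue S + e" .
    moreover have "f ` S \<in> lmeasurable \<and> measure lebesgue (f ` S) \<le> B ^ DIM('a) * measure lebesgue (T \<inter> W)"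
      using T(1,2) S(2) W Tm fS
      by (intro lipschitz_image_measure_le_open lipschitz_on_subset[OF lip])
         (auto intro: fmeasurable_Int_fmeasurable)
    moreover have "0 \<le> B ^ DIM('a)"
      using lipschitz_on_nonneg[OF lip] by simp
    ultimately show ?thesis
      by (meson mult_left_mono order_trans)
  qed
  have "measure lebesgue (f ` S) \<le> B ^ DIM('a) * measure lebesgue S"
  proof (rule field_le_epsilon)
    fix e :: real assume "0 < e"
    define c where "c = B ^ DIM('a)"
    have "0 \<le> c" unfolding c_def using lipschitz_on_nonneg[OF lip] by simp
    then have "c * (e / (c + 1)) \<le> e"
      using \<open>0 < e\<close> by (simp add: field_simps)
    moreover have "measure lebesgue (f ` S) \<le> c * (measure lebesgue S + e / (c + 1))"
      using approx[of "e / (c + 1)"] \<open>0 < e\<close> \<open>0 \<le> c\<close> unfolding c_def by simp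
    ultimately show "measure lebesgue (f ` S) \<le> B ^ DIM('a) * measure lebesgue S + e"
      unfolding c_def by (simp add: distrib_left)
  qed
  then show ?thesis
    using approx[of 1] by simp
qed

lemma set_integrable_const_ball:
  "set_integrable lebesgue (ball (x::'a::euclidean_space) r) (\<lambda>_. c :: real)"
  unfolding set_integrable_def
proof (intro integrable_scaleR_left integrable_real_indicator)
  show "emeasure lebesgue (ball x r) < \<infinity>"
    using lmeasurable_ball[of x r] unfolding fmeasurable_def by blast
qed simp

lemma ball_osc_nonneg: "0 \<le> ball_osc g x r"
  unfolding ball_osc_def set_lebesgue_integral_def
  by (intro divide_nonneg_nonneg integral_nonneg_AE) (auto simp: indicator_def)

lemma ball_osc_cong:
  assumes "\<And>y. y \<in> ball x r \<Longrightarrow> g y = h y"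
  shows "ball_osc g x r = ball_osc h x r"
proof -
  have "(\<integral>y\<in>ball x r. g y \<partial>lebesgue) = (\<integral>y\<in>ball x r. h y \<partial>lebesgue)"
    by (rule set_lebesgue_integral_cong) (use assms in auto)
  then have "ball_avg g x r = ball_avg h x r"
    unfolding ball_avg_def by simp
  moreover have "(\<integral>y\<in>ball x r. \<bar>g y - c\<bar> \<partial>lebesgue) = (\<integral>y\<in>ball x r. \<bar>h y - c\<bar> \<partial>lebesgue)" for c
    by (rule set_lebesgue_integral_cong) (use assms in auto)
  ultimately show ?thesis
    unfolding ball_osc_def by simp
qed

lemma set_integral_const_ball:
  "(\<integral>y\<in>ball (x::'a::euclidean_space) r. d \<partial>lebesgue) = measure lebesgue (ball x r) * (d :: real)"
  by (subst set_integral_const) (auto simp: emeasure_eq_measure2)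

lemma ball_osc_const: "ball_osc (\<lambda>_. c) (x::'a::euclidean_space) r = 0"
  unfolding ball_osc_def ball_avg_def set_integral_const_ball by simp

lemma ball_osc_le_const:
  fixes g :: "'a::euclidean_space \<Rightarrow> real"
  assumes r: "0 < r" and g: "set_integrable lebesgue (ball x r) g"
  shows "ball_osc g x r \<le> 2 * (\<integral>y\<in>ball x r. \<bar>g y - c\<bar> \<partial>lebesgue) / measure lebesgue (ball x r)"
proof -
  define m where "m = measure lebesgue (ball x r)"
  define a where "a = ball_avg g x r"
  have m: "0 < m" unfolding m_def using content_ball_pos[OF r] by simp
  have const: "set_integrable lebesgue (ball x r) (\<lambda>_. d)" for d :: real
    by (rule set_integrable_const_ball)
  have dev: "set_integrable lebesgue (ball x r) (\<lambda>y. \<bar>g y - d\<bar>)" for d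
    by (intro set_integrable_abs set_integral_diff(1)[OF g const])
  have int_const: "(\<integral>y\<in>ball x r. d \<partial>lebesgue) = m * d" for d
    unfolding m_def by (rule set_integral_const_ball)
  have am: "a * m = (\<integral>y\<in>ball x r. g y \<partial>lebesgue)"
    using m by (simp add: a_def ball_avg_def m_def[symmetric])
  have "m * \<bar>c - a\<bar> = \<bar>(\<integral>y\<in>ball x r. c \<partial>lebesgue) - (\<integral>y\<in>ball x r. g y \<partial>lebesgue)\<bar>"
  proof -
    have "m * \<bar>c - a\<bar> = \<bar>c * m - a * m\<bar>"
      using m by (simp add: abs_mult left_diff_distrib[symmetric] mult.commute)
    then show ?thesis by (simp only: int_const[of c] am[symmetric] mult.commute[of m c])
  qed
  also have "\<dots> = \<bar>\<integral>y\<in>ball x r. c - g y \<partial>lebesgue\<bar>"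
    using set_integral_diff(2)[OF const g] by simp
  also have "\<dots> \<le> (\<integral>y\<in>ball x r. \<bar>g y - c\<bar> \<partial>lebesgue)"
    using set_integral_norm_bound[OF set_integral_diff(1)[OF const g]] by (simp add: abs_minus_commute)
  finally have mean_dev: "m * \<bar>c - a\<bar> \<le> (\<integral>y\<in>ball x r. \<bar>g y - c\<bar> \<partial>lebesgue)" .
  have "(\<integral>y\<in>ball x r. \<bar>g y - a\<bar> \<partial>lebesgue) \<le> (\<integral>y\<in>ball x r. \<bar>g y - c\<bar> + \<bar>c - a\<bar> \<partial>lebesgue)"
    by (intro set_integral_mono dev set_integral_add(1)[OF dev const]) auto
  also have "\<dots> = (\<integral>y\<in>ball x r. \<bar>g y - c\<bar> \<partial>lebesgue) + m * \<bar>c - a\<bar>"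
    using set_integral_add(2)[OF dev const] int_const by simp
  finally have "(\<integral>y\<in>ball x r. \<bar>g y - a\<bar> \<partial>lebesgue) \<le> 2 * (\<integral>y\<in>ball x r. \<bar>g y - c\<bar> \<partial>lebesgue)"
    using mean_dev by simp
  then show ?thesis
    unfolding ball_osc_def a_def[symmetric] m_def[symmetric] using m by (simp add: divide_right_mono)
qed

lemma ball_osc_le_BMO_seminorm:
  assumes "in_bmo f" "0 < r"
  shows "ball_osc f x r \<le> BMO_seminorm f"
  unfolding BMO_seminorm_def
  using assms cSUP_upper[of "(x, r)" "{(x, r). r > 0}" "\<lambda>p. ball_osc f (fst p) (snd p)"]
  by (simp add: in_bmo_def)

lemma BMO_seminorm_nonneg: "in_bmo f \<Longrightarrow> 0 \<le> BMO_seminorm f"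
  using ball_osc_le_BMO_seminorm[of f 1 0] ball_osc_nonneg[of f 0 1] by fastforce

lemma set_integral_abs_nonneg: "0 \<le> (\<integral>y\<in>A. \<bar>f y :: real\<bar> \<partial>lebesgue)"
  unfolding set_lebesgue_integral_def by (intro integral_nonneg_AE) (auto simp: indicator_def)

lemma set_integral_abs_le_integral_abs:
  fixes g :: "'a \<Rightarrow> real"
  assumes "integrable M g" "A \<in> sets M"
  shows "(\<integral>y\<in>A. \<bar>g y\<bar> \<partial>M) \<le> (\<integral>y. \<bar>g y\<bar> \<partial>M)"
  unfolding set_lebesgue_integral_def
  using assms integrable_mult_indicator[OF assms(2) integrable_abs[OF assms(1)]]
  by (intro integral_mono) (auto simp: indicator_def)

lemma set_integral_ball_le_L1ul_norm:
  "in_bmo f \<Longrightarrow> (\<integral>y\<in>ball x 1. \<bar>f y\<bar> \<partial>lebesgue) \<le> L1ul_norm f"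
  unfolding L1ul_norm_def in_bmo_def by (intro cSUP_upper) auto

lemma L1ul_norm_nonneg: "in_bmo f \<Longrightarrow> 0 \<le> L1ul_norm f"
  using set_integral_ball_le_L1ul_norm[of f 0] set_integral_abs_nonneg[of "ball 0 1" f] by linarith

lemma in_bmo_bmo_norm_leI:
  fixes g :: "'a::euclidean_space \<Rightarrow> real"
  assumes "\<And>x r. set_integrable lebesgue (ball x r) g"
    and osc: "\<And>x r. 0 < r \<Longrightarrow> ball_osc g x r \<le> Q"
    and L1: "\<And>x. (\<integral>y\<in>ball x 1. \<bar>g y\<bar> \<partial>lebesgue) \<le> I"
  shows "in_bmo g \<and> bmo_norm g \<le> Q + I"
proof -
  have "BMO_seminorm g \<le> Q"
    unfolding BMO_seminorm_def by (rule cSUP_least) (use osc in \<open>auto intro: exI[of _ 1]\<close>)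
  moreover have "L1ul_norm g \<le> I"
    unfolding L1ul_norm_def by (rule cSUP_least) (use L1 in auto)
  moreover have "bdd_above ((\<lambda>p. ball_osc g (fst p) (snd p)) ` {(x, r). r > 0})"
    using osc by (intro bdd_aboveI2[where M=Q]) auto
  moreover have "bdd_above ((\<lambda>x. \<integral>y\<in>ball x 1. \<bar>g y\<bar> \<partial>lebesgue) ` UNIV)"
    using L1 by (intro bdd_aboveI2[where M=I]) auto
  ultimately have "in_bmo g"
    unfolding in_bmo_def locally_integrable_def using assms(1) by blast
  with \<open>BMO_seminorm g \<le> Q\<close> \<open>L1ul_norm g \<le> I\<close> show ?thesis
    unfolding bmo_norm_def by simp
qed

lemma set_integral_abs_le_sum_balls:
  fixes f :: "'a::euclidean_space \<Rightarrow> real"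
  assumes F: "finite F" and cover: "A \<subseteq> (\<Union>p\<in>F. ball p 1)" and A: "A \<in> sets lebesgue"
    and f: "\<And>p. set_integrable lebesgue (ball p 1) f" "set_integrable lebesgue A f"
  shows "(\<integral>y\<in>A. \<bar>f y\<bar> \<partial>lebesgue) \<le> (\<Sum>p\<in>F. \<integral>y\<in>ball p 1. \<bar>f y\<bar> \<partial>lebesgue)"
proof -
  have "(\<integral>y\<in>A. \<bar>f y\<bar> \<partial>lebesgue) \<le> (\<integral>y. (\<Sum>p\<in>F. indicator (ball p 1) y * \<bar>f y\<bar>) \<partial>lebesgue)"
    unfolding set_lebesgue_integral_def
  proof (intro integral_mono Bochner_Integration.integrable_sum)
    show "integrable lebesgue (\<lambda>y. indicator A y *\<^sub>R \<bar>f y\<bar>)"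
         "integrable lebesgue (\<lambda>y. indicator (ball p 1) y * \<bar>f y\<bar>)" for p
      using set_integrable_abs[OF f(2)] set_integrable_abs[OF f(1)[of p]]
      by (simp_all add: set_integrable_def)
    show "indicator A y *\<^sub>R \<bar>f y\<bar> \<le> (\<Sum>p\<in>F. indicator (ball p 1) y * \<bar>f y\<bar>)" for y
    proof (cases "y \<in> A")
      case True
      then obtain p where p: "p \<in> F" "y \<in> ball p 1" using cover by auto
      then have "indicator A y *\<^sub>R \<bar>f y\<bar> = indicator (ball p 1) y * \<bar>f y\<bar>"
        using True by simp
      also have "\<dots> \<le> (\<Sum>p\<in>F. indicator (ball p 1) y * \<bar>f y\<bar>)"
        using p(1) F by (intro member_le_sum) auto
      finally show ?thesis .
    qed (simp add: sum_nonneg)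
  qed
  also have "\<dots> = (\<Sum>p\<in>F. \<integral>y\<in>ball p 1. \<bar>f y\<bar> \<partial>lebesgue)"
    unfolding set_lebesgue_integral_def using set_integrable_abs[OF f(1)]
    by (subst Bochner_Integration.integral_sum) (auto simp: set_integrable_def)
  finally show ?thesis .
qed

lemma bounded_set_integral_le_L1ul_norm:
  fixes A :: "'a::euclidean_space set"
  assumes "bounded A" "A \<in> sets lebesgue"
  obtains N where "0 \<le> N" "\<And>f. in_bmo f \<Longrightarrow> (\<integral>y\<in>A. \<bar>f y\<bar> \<partial>lebesgue) \<le> N * L1ul_norm f"
proof -
  obtain F where F: "finite F" "closure A \<subseteq> (\<Union>p\<in>F. ball p 1)"
  proof (rule compactE_image[of "closure A" "closure A" "\<lambda>p. ball p 1"])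
    show "compact (closure A)"
      using assms(1) by (simp add: compact_closure)
    show "closure A \<subseteq> (\<Union>p\<in>closure A. ball p 1)"
      by force
  qed auto
  obtain R where "A \<subseteq> ball 0 R"
    using bounded_subset_ballD[OF assms(1)] by blast
  have "(\<integral>y\<in>A. \<bar>f y\<bar> \<partial>lebesgue) \<le> real (card F) * L1ul_norm f" if "in_bmo f" for f
  proof -
    have f: "set_integrable lebesgue (ball p r) f" for p r
      using that by (simp add: in_bmo_def locally_integrable_def)
    have "(\<integral>y\<in>A. \<bar>f y\<bar> \<partial>lebesgue) \<le> (\<Sum>p\<in>F. \<integral>y\<in>ball p 1. \<bar>f y\<bar> \<partial>lebesgue)"
      using F closure_subset assms(2) \<open>A \<subseteq> ball 0 R\<close>
      by (intro set_integral_abs_le_sum_balls f set_integrable_subset[OF f[of 0 R]]) auto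
    also have "\<dots> \<le> (\<Sum>p\<in>F. L1ul_norm f)"
      by (intro sum_mono set_integral_ball_le_L1ul_norm[OF that])
    finally show ?thesis by simp
  qed
  then show ?thesis
    using that[of "real (card F)"] by simp
qed

text \<open>The left inverse \<psi> is what makes \<phi> Lebesgue measurable: the \<phi>-preimage of a set A is the
  \<psi>-image of A, and Lipschitz images of Lebesgue sets are Lebesgue sets of controlled measure.\<close>
locale lipschitz_left_inverse =
  fixes \<phi> \<psi> :: "'a::euclidean_space \<Rightarrow> 'a" and U W :: "'a set" and B :: real
  assumes open_W: "open W" and bounded_W: "bounded W" and maps_to: "\<phi> ` U \<subseteq> W"
    and lipschitz_\<phi>: "B-lipschitz_on U \<phi>" and lipschitz_\<psi>: "B-lipschitz_on W \<psi>"
    and left_inverse: "\<And>z. z \<in> U \<Longrightarrow> \<psi> (\<phi> z) = z"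
    and B_pos: "0 < B"
begin

lemma preimage_eq_image:
  assumes "S \<subseteq> U"
  shows "{z \<in> S. \<phi> z \<in> A} = \<psi> ` (A \<inter> \<phi> ` S)"
  using assms left_inverse by (force intro: rev_image_eqI)

lemma image_in_sets_lebesgue:
  assumes "S \<subseteq> U" "S \<in> sets lebesgue"
  shows "\<phi> ` S \<in> sets lebesgue"
  using assms by (rule lipschitz_image_in_sets_lebesgue[OF order_refl lipschitz_\<phi>])

lemma measurable_lebesgue_on:
  assumes S: "S \<subseteq> U" "S \<in> sets lebesgue"
  shows "\<phi> \<in> lebesgue_on S \<rightarrow>\<^sub>M lebesgue"
proof (rule measurableI)
  fix A :: "'a set" assume A: "A \<in> sets lebesgue"
  have "\<psi> ` (A \<inter> \<phi> ` S) \<in> sets lebesgue"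
    using A image_in_sets_lebesgue[OF S] maps_to S(1)
    by (intro lipschitz_image_in_sets_lebesgue[OF order_refl lipschitz_\<psi>]) auto
  moreover have "\<phi> -` A \<inter> space (lebesgue_on S) = \<psi> ` (A \<inter> \<phi> ` S)"
    using preimage_eq_image[OF S(1), of A] by (auto simp flip: Collect_conj_eq)
  ultimately show "\<phi> -` A \<inter> space (lebesgue_on S) \<in> sets (lebesgue_on S)"
    using S(2) by (simp add: sets_restrict_space_iff) blast
qed auto

lemma emeasure_preimage_le:
  assumes S: "S \<subseteq> U" "S \<in> sets lebesgue" and A: "A \<in> sets lebesgue"
  shows "emeasure lebesgue {z \<in> S. \<phi> z \<in> A} \<le> ennreal (B ^ DIM('a)) * emeasure lebesgue (A \<inter> \<phi> ` S)"
proof -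
  define T where "T = A \<inter> \<phi> ` S"
  have TW: "T \<subseteq> W"
    using maps_to S(1) unfolding T_def by auto
  have T: "T \<in> lmeasurable"
    using bounded_subset[OF bounded_W TW] A image_in_sets_lebesgue[OF S]
    unfolding T_def by (auto intro: bounded_set_imp_lmeasurable)
  then have \<psi>T: "\<psi> ` T \<in> lmeasurable" "measure lebesgue (\<psi> ` T) \<le> B ^ DIM('a) * measure lebesgue T"
    using lipschitz_image_measure_le[OF open_W lipschitz_\<psi> _ TW] by auto
  have "emeasure lebesgue (\<psi> ` T) \<le> ennreal (B ^ DIM('a) * measure lebesgue T)"
    using \<psi>T by (simp add: emeasure_eq_measure2 ennreal_leI)
  also have "\<dots> = ennreal (B ^ DIM('a)) * emeasure lebesgue T"
    using T B_pos by (simp add: emeasure_eq_measure2 ennreal_mult)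
  finally show ?thesis
    using preimage_eq_image[OF S(1)] unfolding T_def by simp
qed

lemma nn_integral_comp_le:
  assumes S: "S \<subseteq> U" "S \<in> sets lebesgue" and h: "h \<in> borel_measurable lebesgue"
  shows "(\<integral>\<^sup>+z. h (\<phi> z) * indicator S z \<partial>lebesgue)
         \<le> ennreal (B ^ DIM('a)) * (\<integral>\<^sup>+x. h x * indicator (\<phi> ` S) x \<partial>lebesgue)"
proof -
  define c where "c = ennreal (B ^ DIM('a))"
  have \<phi>S: "\<phi> ` S \<in> sets lebesgue"
    by (rule image_in_sets_lebesgue[OF S])
  have \<phi>: "\<phi> \<in> lebesgue_on S \<rightarrow>\<^sub>M lebesgue"
    by (rule measurable_lebesgue_on[OF S])
  have distr_le: "distr (lebesgue_on S) lebesgue \<phi> \<le> density lebesgue (\<lambda>x. c * indicator (\<phi> ` S) x)"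
    unfolding le_measure_iff
  proof (simp, intro le_funI)
    fix A :: "'a set"
    show "emeasure (distr (lebesgue_on S) lebesgue \<phi>) A
          \<le> emeasure (density lebesgue (\<lambda>x. c * indicator (\<phi> ` S) x)) A"
    proof (cases "A \<in> sets lebesgue")
      case True
      have "emeasure (distr (lebesgue_on S) lebesgue \<phi>) A = emeasure lebesgue {z \<in> S. \<phi> z \<in> A}"
        using emeasure_distr[OF \<phi> True] S(2)
        by (simp add: emeasure_restrict_space Int_commute Collect_conj_eq vimage_def)
      also have "\<dots> \<le> c * emeasure lebesgue (A \<inter> \<phi> ` S)"
        unfolding c_def by (rule emeasure_preimage_le[OF S True])
      also have "\<dots> = emeasure (density lebesgue (\<lambda>x. c * indicator (\<phi> ` S) x)) A"
        using True \<phi>S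
        by (simp add: emeasure_density nn_integral_cmult_indicator indicator_inter_arith[symmetric] mult.assoc Int_commute)
      finally show ?thesis .
    qed (simp add: emeasure_notin_sets)
  qed
  have "(\<integral>\<^sup>+z. h (\<phi> z) * indicator S z \<partial>lebesgue) = (\<integral>\<^sup>+z. h (\<phi> z) \<partial>lebesgue_on S)"
    using S(2) by (simp add: nn_integral_restrict_space)
  also have "\<dots> = integral\<^sup>N (distr (lebesgue_on S) lebesgue \<phi>) h"
    using \<phi> h by (simp add: nn_integral_distr)
  also have "\<dots> \<le> integral\<^sup>N (density lebesgue (\<lambda>x. c * indicator (\<phi> ` S) x)) h"
    using distr_le by (intro nn_integral_mono_measure) auto
  also have "\<dots> = c * (\<integral>\<^sup>+x. h x * indicator (\<phi> ` S) x \<partial>lebesgue)"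
    using \<phi>S h by (simp add: nn_integral_density nn_integral_cmult mult_ac)
  finally show ?thesis
    unfolding c_def .
qed

lemma set_integral_comp_le:
  fixes h :: "'a \<Rightarrow> real"
  assumes S: "S \<subseteq> U" "S \<in> sets lebesgue" and T: "\<phi> ` S \<subseteq> T"
    and h: "set_integrable lebesgue T h"
  shows "set_integrable lebesgue S (\<lambda>z. h (\<phi> z))"
    and "(\<integral>z\<in>S. \<bar>h (\<phi> z)\<bar> \<partial>lebesgue) \<le> B ^ DIM('a) * (\<integral>x\<in>T. \<bar>h x\<bar> \<partial>lebesgue)"
proof -
  define hT where "hT x = indicator T x * h x" for x
  have hT: "integrable lebesgue hT"
    using h unfolding set_integrable_def hT_def by simp
  have comp_eq: "indicator S z * h (\<phi> z) = indicator S z * hT (\<phi> z)" for z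
    using T by (auto simp: hT_def indicator_def)
  have meas: "(\<lambda>z. indicator S z * hT (\<phi> z)) \<in> borel_measurable lebesgue"
    using measurable_comp[OF measurable_lebesgue_on[OF S] borel_measurable_integrable[OF hT]] S(2)
    by (simp add: borel_measurable_restrict_space_iff o_def mult.commute)
  have "(\<integral>\<^sup>+z. ennreal \<bar>indicator S z * hT (\<phi> z)\<bar> \<partial>lebesgue)
        = (\<integral>\<^sup>+z. ennreal \<bar>hT (\<phi> z)\<bar> * indicator S z \<partial>lebesgue)"
    by (intro nn_integral_cong) (auto simp: indicator_def)
  also have "\<dots> \<le> ennreal (B ^ DIM('a)) * (\<integral>\<^sup>+x. ennreal \<bar>hT x\<bar> * indicator (\<phi> ` S) x \<partial>lebesgue)"
    using hT by (intro nn_integral_comp_le[OF S]) auto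
  also have "\<dots> \<le> ennreal (B ^ DIM('a)) * (\<integral>\<^sup>+x. ennreal \<bar>hT x\<bar> \<partial>lebesgue)"
    by (intro mult_left_mono nn_integral_mono) (auto simp: indicator_def)
  also have "\<dots> = ennreal (B ^ DIM('a) * (\<integral>x. \<bar>hT x\<bar> \<partial>lebesgue))"
    using hT B_pos by (simp add: nn_integral_eq_integral ennreal_mult)
  finally have bound: "(\<integral>\<^sup>+z. ennreal \<bar>indicator S z * hT (\<phi> z)\<bar> \<partial>lebesgue)
                       \<le> ennreal (B ^ DIM('a) * (\<integral>x. \<bar>hT x\<bar> \<partial>lebesgue))" .
  have int: "integrable lebesgue (\<lambda>z. indicator S z * hT (\<phi> z))"
    using bound by (intro integrableI_bounded[OF meas]) (auto simp: top_unique less_top[symmetric])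
  then show "set_integrable lebesgue S (\<lambda>z. h (\<phi> z))"
    unfolding set_integrable_def by (simp add: comp_eq)
  have "ennreal (\<integral>z. \<bar>indicator S z * hT (\<phi> z)\<bar> \<partial>lebesgue)
        = (\<integral>\<^sup>+z. ennreal \<bar>indicator S z * hT (\<phi> z)\<bar> \<partial>lebesgue)"
    using int by (intro nn_integral_eq_integral[symmetric]) auto
  with bound have "ennreal (\<integral>z. \<bar>indicator S z * hT (\<phi> z)\<bar> \<partial>lebesgue)
                   \<le> ennreal (B ^ DIM('a) * (\<integral>x. \<bar>hT x\<bar> \<partial>lebesgue))"
    by simp
  then have "(\<integral>z. \<bar>indicator S z * hT (\<phi> z)\<bar> \<partial>lebesgue) \<le> B ^ DIM('a) * (\<integral>x. \<bar>hT x\<bar> \<partial>lebesgue)"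
    using B_pos by (subst (asm) ennreal_le_iff) auto
  moreover have "(\<integral>z\<in>S. \<bar>h (\<phi> z)\<bar> \<partial>lebesgue) = (\<integral>z. \<bar>indicator S z * hT (\<phi> z)\<bar> \<partial>lebesgue)"
    unfolding set_lebesgue_integral_def using comp_eq[symmetric]
    by (intro Bochner_Integration.integral_cong) (auto simp: indicator_def abs_mult)
  moreover have "(\<integral>x\<in>T. \<bar>h x\<bar> \<partial>lebesgue) = (\<integral>x. \<bar>hT x\<bar> \<partial>lebesgue)"
    unfolding set_lebesgue_integral_def hT_def
    by (intro Bochner_Integration.integral_cong) (auto simp: indicator_def)
  ultimately show "(\<integral>z\<in>S. \<bar>h (\<phi> z)\<bar> \<partial>lebesgue) \<le> B ^ DIM('a) * (\<integral>x\<in>T. \<bar>h x\<bar> \<partial>lebesgue)"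
    by simp
qed

lemma ball_osc_comp_le:
  fixes f :: "'a \<Rightarrow> real"
  assumes ball: "ball y r \<subseteq> U" and r: "0 < r" and f: "locally_integrable f"
  shows "set_integrable lebesgue (ball y r) (\<lambda>z. f (\<phi> z))"
    and "ball_osc (\<lambda>z. f (\<phi> z)) y r \<le> 2 * B ^ (2 * DIM('a)) * ball_osc f (\<phi> y) (B * r)"
proof -
  define c where "c = ball_avg f (\<phi> y) (B * r)"
  have image: "\<phi> ` ball y r \<subseteq> ball (\<phi> y) (B * r)"
  proof clarify
    fix z assume "z \<in> ball y r"
    then have "dist (\<phi> y) (\<phi> z) \<le> B * dist y z"
      using ball r by (intro lipschitz_onD[OF lipschitz_\<phi>]) auto
    also have "\<dots> < B * r"
      using \<open>z \<in> ball y r\<close> B_pos by simp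
    finally show "\<phi> z \<in> ball (\<phi> y) (B * r)" by simp
  qed
  have fb: "set_integrable lebesgue (ball (\<phi> y) (B * r)) f"
    using f by (simp add: locally_integrable_def)
  have dev: "set_integrable lebesgue (ball (\<phi> y) (B * r)) (\<lambda>x. f x - c)"
    using set_integral_diff(1)[OF fb set_integrable_const_ball] .
  show int: "set_integrable lebesgue (ball y r) (\<lambda>z. f (\<phi> z))"
    using set_integral_comp_le(1)[OF ball _ image fb] by simp
  have ratio: "measure lebesgue (ball (\<phi> y) (B * r)) = B ^ DIM('a) * measure lebesgue (ball y r)"
    using content_ball_conv_unit_ball[of "B * r" "\<phi> y"] content_ball_conv_unit_ball[of r y] r B_pos
    by (simp add: power_mult_distrib)
  have "ball_osc (\<lambda>z. f (\<phi> z)) y r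
        \<le> 2 * (\<integral>z\<in>ball y r. \<bar>f (\<phi> z) - c\<bar> \<partial>lebesgue) / measure lebesgue (ball y r)"
    by (rule ball_osc_le_const[OF r int])
  also have "\<dots> \<le> 2 * (B ^ DIM('a) * (\<integral>x\<in>ball (\<phi> y) (B * r). \<bar>f x - c\<bar> \<partial>lebesgue)) / measure lebesgue (ball y r)"
    using set_integral_comp_le(2)[OF ball _ image dev] content_ball_pos[OF r, of y]
    by (intro divide_right_mono) auto
  also have "\<dots> = 2 * B ^ (2 * DIM('a)) * ball_osc f (\<phi> y) (B * r)"
  proof -
    define m where "m = measure lebesgue (ball y r)"
    define I where "I = (\<integral>x\<in>ball (\<phi> y) (B * r). \<bar>f x - c\<bar> \<partial>lebesgue)"
    have "m \<noteq> 0"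
      using content_ball_pos[OF r, of y] unfolding m_def by simp
    then have "B ^ DIM('a) * m \<noteq> 0"
      using B_pos by simp
    moreover have "ball_osc f (\<phi> y) (B * r) = I / (B ^ DIM('a) * m)"
      unfolding ball_osc_def c_def[symmetric] ratio m_def I_def ..
    ultimately show ?thesis
      using \<open>m \<noteq> 0\<close> unfolding m_def[symmetric] I_def[symmetric]
      by (simp add: power_even_eq power2_eq_square)
  qed
  finally show "ball_osc (\<lambda>z. f (\<phi> z)) y r \<le> 2 * B ^ (2 * DIM('a)) * ball_osc f (\<phi> y) (B * r)" .
qed

lemma integrable_extension_by_zero:
  fixes f g :: "'a \<Rightarrow> real"
  assumes E: "E \<subseteq> U" "E \<in> sets lebesgue" and f: "locally_integrable f"
    and g_eq: "\<And>z. z \<in> E \<Longrightarrow> g z = f (\<phi> z)" and g_zero: "\<And>z. z \<notin> E \<Longrightarrow> g z = 0"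
  shows "integrable lebesgue g"
    and "(\<integral>z. \<bar>g z\<bar> \<partial>lebesgue) \<le> B ^ DIM('a) * (\<integral>x\<in>W. \<bar>f x\<bar> \<partial>lebesgue)"
proof -
  obtain R where R: "W \<subseteq> ball 0 R"
    using bounded_subset_ballD[OF bounded_W, of 0] by auto
  have "set_integrable lebesgue (ball 0 R) f"
    using f unfolding locally_integrable_def by blast
  moreover have "W \<in> sets lebesgue"
    using lmeasurable_open[OF bounded_W open_W] by blast
  ultimately have fW: "set_integrable lebesgue W f"
    using R by (rule set_integrable_subset)
  have image: "\<phi> ` E \<subseteq> W"
    using maps_to E(1) by blast
  have g: "g = (\<lambda>z. indicator E z *\<^sub>R f (\<phi> z))"
    using g_eq g_zero by (auto simp: indicator_def)
  show "integrable lebesgue g"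
    using set_integral_comp_le(1)[OF E image fW] unfolding g set_integrable_def .
  have "(\<integral>z. \<bar>g z\<bar> \<partial>lebesgue) = (\<integral>z\<in>E. \<bar>f (\<phi> z)\<bar> \<partial>lebesgue)"
    unfolding g set_lebesgue_integral_def by (intro Bochner_Integration.integral_cong) (auto simp: indicator_def)
  also have "\<dots> \<le> B ^ DIM('a) * (\<integral>x\<in>W. \<bar>f x\<bar> \<partial>lebesgue)"
    by (rule set_integral_comp_le(2)[OF E image fW])
  finally show "(\<integral>z. \<bar>g z\<bar> \<partial>lebesgue) \<le> B ^ DIM('a) * (\<integral>x\<in>W. \<bar>f x\<bar> \<partial>lebesgue)" .
qed

lemma ball_osc_extension_by_zero_le:
  fixes f g :: "'a \<Rightarrow> real"
  assumes \<rho>: "0 < \<rho>"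
    and near: "\<And>y r. r \<le> \<rho> \<Longrightarrow> ball y r \<inter> E \<noteq> {} \<Longrightarrow> ball y r \<subseteq> U"
    and f: "in_bmo f" and g_eq: "\<And>z. z \<in> U \<Longrightarrow> g z = f (\<phi> z)"
    and g_zero: "\<And>z. z \<notin> E \<Longrightarrow> g z = 0" and g: "integrable lebesgue g"
    and r: "0 < r"
  shows "ball_osc g y r
         \<le> 2 * B ^ (2 * DIM('a)) * BMO_seminorm f + 2 * (\<integral>z. \<bar>g z\<bar> \<partial>lebesgue) / measure lebesgue (ball (0::'a) \<rho>)"
    (is "_ \<le> ?Q1 + ?Q2")
proof -
  have Q1: "0 \<le> ?Q1"
    using BMO_seminorm_nonneg[OF f] B_pos by simp
  have Q2: "0 \<le> ?Q2"
    by (simp add: divide_nonneg_nonneg)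
  consider "\<rho> < r" | "ball y r \<inter> E = {}" | "r \<le> \<rho>" "ball y r \<inter> E \<noteq> {}"
    by linarith
  then show ?thesis
  proof cases
    case 1
    have "set_integrable lebesgue (ball y r) g"
      unfolding set_integrable_def by (rule integrable_mult_indicator[OF _ g]) simp
    then have "ball_osc g y r \<le> 2 * (\<integral>z\<in>ball y r. \<bar>g z - 0\<bar> \<partial>lebesgue) / measure lebesgue (ball y r)"
      by (rule ball_osc_le_const[OF r])
    also have "\<dots> \<le> 2 * (\<integral>z. \<bar>g z\<bar> \<partial>lebesgue) / measure lebesgue (ball y r)"
      using set_integral_abs_le_integral_abs[OF g, of "ball y r"]
      by (intro divide_right_mono) auto
    also have "\<dots> \<le> ?Q2"
    proof (intro divide_left_mono)
      show "measure lebesgue (ball (0::'a) \<rho>) \<le> measure lebesgue (ball y r)"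
        using 1 \<rho> content_ball_conv_unit_ball[of \<rho> "0::'a"] content_ball_conv_unit_ball[of r y]
        by (simp add: power_mono)
      show "0 < measure lebesgue (ball y r) * measure lebesgue (ball (0::'a) \<rho>)"
        using content_ball_pos[OF r, of y] content_ball_pos[OF \<rho>, of 0] by simp
    qed simp
    finally show ?thesis
      using Q1 by linarith
  next
    case 2
    then have "ball_osc g y r = ball_osc (\<lambda>_. 0) y r"
      using g_zero by (intro ball_osc_cong) blast
    then show ?thesis
      using Q1 Q2 by (simp add: ball_osc_const)
  next
    case 3
    then have ball: "ball y r \<subseteq> U"
      using near by blast
    then have "ball_osc g y r = ball_osc (\<lambda>z. f (\<phi> z)) y r"
      using g_eq by (intro ball_osc_cong) auto
    also have "\<dots> \<le> 2 * B ^ (2 * DIM('a)) * ball_osc f (\<phi> y) (B * r)"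
      using f by (intro ball_osc_comp_le(2)[OF ball r]) (simp add: in_bmo_def)
    also have "\<dots> \<le> ?Q1"
      using ball_osc_le_BMO_seminorm[OF f, of "B * r"] B_pos r by simp
    finally show ?thesis
      using Q2 by linarith
  qed
qed

lemma bmo_norm_extension_by_zero_le:
  fixes f g :: "'a \<Rightarrow> real"
  assumes \<rho>: "0 < \<rho>" and E: "E \<subseteq> U" "E \<in> sets lebesgue"
    and near: "\<And>y r. r \<le> \<rho> \<Longrightarrow> ball y r \<inter> E \<noteq> {} \<Longrightarrow> ball y r \<subseteq> U"
    and f: "in_bmo f" and g_eq: "\<And>z. z \<in> U \<Longrightarrow> g z = f (\<phi> z)" and g_zero: "\<And>z. z \<notin> E \<Longrightarrow> g z = 0"
  shows "in_bmo g \<and> bmo_norm g \<le> 2 * B ^ (2 * DIM('a)) * BMO_seminorm f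
           + (2 / measure lebesgue (ball (0::'a) \<rho>) + 1) * (B ^ DIM('a) * (\<integral>x\<in>W. \<bar>f x\<bar> \<partial>lebesgue))"
proof -
  define I where "I = (\<integral>z. \<bar>g z\<bar> \<partial>lebesgue)"
  have g: "integrable lebesgue g" and I: "I \<le> B ^ DIM('a) * (\<integral>x\<in>W. \<bar>f x\<bar> \<partial>lebesgue)"
    unfolding I_def using f E(1) g_eq g_zero
    by (auto intro!: integrable_extension_by_zero[OF E] simp: in_bmo_def)
  have "in_bmo g \<and> bmo_norm g
          \<le> 2 * B ^ (2 * DIM('a)) * BMO_seminorm f + 2 * I / measure lebesgue (ball (0::'a) \<rho>) + I"
  proof (rule in_bmo_bmo_norm_leI)
    show "set_integrable lebesgue (ball x r) g" for x r
      unfolding set_integrable_def by (rule integrable_mult_indicator[OF _ g]) simp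
    show "ball_osc g x r \<le> 2 * B ^ (2 * DIM('a)) * BMO_seminorm f + 2 * I / measure lebesgue (ball (0::'a) \<rho>)"
      if "0 < r" for x r
      unfolding I_def by (rule ball_osc_extension_by_zero_le[OF \<rho> near f g_eq g_zero g that])
    show "(\<integral>y\<in>ball x 1. \<bar>g y\<bar> \<partial>lebesgue) \<le> I" for x
      unfolding I_def using g by (rule set_integral_abs_le_integral_abs) simp
  qed
  moreover have "2 * I / measure lebesgue (ball (0::'a) \<rho>) + I = (2 / measure lebesgue (ball (0::'a) \<rho>) + 1) * I"
    by (simp add: field_simps)
  moreover have "0 \<le> 2 / measure lebesgue (ball (0::'a) \<rho>) + 1"
    by simp
  ultimately show ?thesis
    using mult_left_mono[OF I] by fastforce
qed

lemma bmo_extension_by_zero: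
  assumes \<rho>: "0 < \<rho>" and E: "E \<subseteq> U" "E \<in> sets lebesgue"
    and near: "\<And>y r. r \<le> \<rho> \<Longrightarrow> ball y r \<inter> E \<noteq> {} \<Longrightarrow> ball y r \<subseteq> U"
  obtains C where "\<And>f g. in_bmo f \<Longrightarrow> (\<And>z. z \<in> U \<Longrightarrow> g z = f (\<phi> z)) \<Longrightarrow> (\<And>z. z \<notin> E \<Longrightarrow> g z = 0)
                     \<Longrightarrow> in_bmo g \<and> bmo_norm g \<le> C * bmo_norm f"
proof -
  obtain N where N: "0 \<le> N" "\<And>f. in_bmo f \<Longrightarrow> (\<integral>x\<in>W. \<bar>f x\<bar> \<partial>lebesgue) \<le> N * L1ul_norm f"
    using bounded_set_integral_le_L1ul_norm[OF bounded_W] open_W by auto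
  define a where "a = 2 * B ^ (2 * DIM('a))"
  define b where "b = (2 / measure lebesgue (ball (0::'a) \<rho>) + 1) * B ^ DIM('a)"
  have a: "0 \<le> a" and b: "0 \<le> b"
    unfolding a_def b_def using B_pos by simp_all
  have "in_bmo g \<and> bmo_norm g \<le> (a + b * N) * bmo_norm f"
    if f: "in_bmo f" and "\<And>z. z \<in> U \<Longrightarrow> g z = f (\<phi> z)" "\<And>z. z \<notin> E \<Longrightarrow> g z = 0"
    for f g :: "'a \<Rightarrow> real"
  proof -
    have "in_bmo g \<and> bmo_norm g \<le> a * BMO_seminorm f + b * (\<integral>x\<in>W. \<bar>f x\<bar> \<partial>lebesgue)"
      using bmo_norm_extension_by_zero_le[OF \<rho> E near that] unfolding a_def b_def by (simp add: mult_ac)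
    moreover have "b * (\<integral>x\<in>W. \<bar>f x\<bar> \<partial>lebesgue) \<le> b * N * L1ul_norm f"
      using mult_left_mono[OF N(2)[OF f] b] by (simp add: mult_ac)
    moreover have "0 \<le> a * L1ul_norm f" "0 \<le> b * N * BMO_seminorm f"
      using a b N(1) L1ul_norm_nonneg[OF f] BMO_seminorm_nonneg[OF f] by simp_all
    ultimately show ?thesis
      unfolding bmo_norm_def by (simp add: algebra_simps)
  qed
  then show ?thesis
    using that by blast
qed

end

lemma lipschitz_left_inverse_ballI:
  assumes \<phi>: "K-lipschitz_on (ball a R) \<phi>" and \<psi>: "K-lipschitz_on (ball b S) \<psi>" and "\<phi> a = b"
    and radii: "r \<le> R" "K * r \<le> S" and K: "0 < K"
    and left_inverse: "\<And>z. z \<in> ball a r \<Longrightarrow> \<psi> (\<phi> z) = z"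
  shows "lipschitz_left_inverse \<phi> \<psi> (ball a r) (ball b S) K"
proof
  have \<phi>r: "K-lipschitz_on (ball a r) \<phi>"
    using radii(1) by (intro lipschitz_on_subset[OF \<phi>] subset_ball)
  then show "K-lipschitz_on (ball a r) \<phi>" .
  show "\<phi> ` ball a r \<subseteq> ball b S"
  proof clarify
    fix z assume z: "z \<in> ball a r"
    then have "0 < r"
      using zero_le_dist[of a z] by (simp del: zero_le_dist)
    with z have "dist (\<phi> a) (\<phi> z) \<le> K * dist a z"
      by (intro lipschitz_onD[OF \<phi>r]) auto
    also have "\<dots> < K * r"
      using z K by simp
    finally show "\<phi> z \<in> ball b S"
      using radii(2) \<open>\<phi> a = b\<close> by simp
  qed
qed (use \<psi> K left_inverse in auto)

lemma lipschitz_on_ball_of_derivative_bound: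
  assumes "ball c R \<subseteq> V" and "\<And>x. x \<in> V \<Longrightarrow> (f has_derivative blinfun_apply (D x)) (at x)"
    and "\<And>x. x \<in> V \<Longrightarrow> norm (D x) \<le> K" and "0 \<le> K"
  shows "K-lipschitz_on (ball c R) f"
proof (rule bounded_derivative_imp_lipschitz[where f'="\<lambda>x. blinfun_apply (D x)"])
  show "(f has_derivative blinfun_apply (D x)) (at x within ball c R)" if "x \<in> ball c R" for x
    using assms(1,2) that by (blast intro: has_derivative_at_withinI)
  show "onorm (blinfun_apply (D x)) \<le> K" if "x \<in> ball c R" for x
    using assms(1,3) that by (auto simp: norm_blinfun.rep_eq[symmetric])
qed (use assms(4) in auto)

lemma lipschitz_left_inverse_of_derivative_bounds:
  assumes U: "ball a R \<subseteq> U" and V: "ball b R \<subseteq> V"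
    and \<phi>: "\<And>y. y \<in> U \<Longrightarrow> (\<phi> has_derivative blinfun_apply (D\<phi> y)) (at y)" "\<And>y. y \<in> U \<Longrightarrow> norm (D\<phi> y) \<le> K"
    and \<psi>: "\<And>x. x \<in> V \<Longrightarrow> (\<psi> has_derivative blinfun_apply (D\<psi> x)) (at x)" "\<And>x. x \<in> V \<Longrightarrow> norm (D\<psi> x) \<le> K"
    and left_inverse: "\<And>y. y \<in> U \<Longrightarrow> \<psi> (\<phi> y) = y" and "\<phi> a = b"
    and K: "0 < K" and radii: "r \<le> R" "K * r \<le> R"
  shows "lipschitz_left_inverse \<phi> \<psi> (ball a r) (ball b R) K"
proof (rule lipschitz_left_inverse_ballI)
  show "K-lipschitz_on (ball a R) \<phi>"
    using U \<phi> K by (intro lipschitz_on_ball_of_derivative_bound) auto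
  show "K-lipschitz_on (ball b R) \<psi>"
    using V \<psi> K by (intro lipschitz_on_ball_of_derivative_bound) auto
  show "\<psi> (\<phi> z) = z" if "z \<in> ball a r" for z
    using that radii(1) U left_inverse by (meson subsetD subset_ball)
qed fact+

lemma le_max_one_SUP_add:
  fixes f :: "'i \<Rightarrow> real" and g :: "'j \<Rightarrow> real"
  assumes "bdd_above (f ` A)" "x \<in> A" "bdd_above (g ` B)" "B \<noteq> {}" "\<And>y. 0 \<le> g y"
  shows "f x \<le> max 1 ((SUP x\<in>A. f x) + (SUP y\<in>B. g y))"
proof -
  obtain y where "y \<in> B"
    using assms(4) by blast
  have "0 \<le> (SUP y\<in>B. g y)"
    using assms(5)[of y] cSUP_upper[OF \<open>y \<in> B\<close> assms(3)] by linarith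
  then show ?thesis
    using cSUP_upper[OF assms(2,1)] by linarith
qed

lemma ball_subset_ball_if_meets:
  fixes a y :: "'a::metric_space"
  assumes "ball y r \<inter> ball a s \<noteq> {}" "r \<le> \<rho>"
  shows "ball y r \<subseteq> ball a (s + 2 * \<rho>)"
proof
  fix z assume z: "z \<in> ball y r"
  obtain u where u: "u \<in> ball y r" "u \<in> ball a s"
    using assms(1) by blast
  have "dist a z \<le> dist a u + dist u y + dist y z"
    by (meson add_right_mono dist_triangle order_trans)
  also have "\<dots> < s + r + r"
    using u z by (simp add: dist_commute add_strict_mono)
  finally show "z \<in> ball a (s + 2 * \<rho>)"
    using assms(2) by simp
qed

theorem mainTheorem11:
  fixes V U V\<rho> U\<rho> :: "'a::euclidean_space set"
    and \<psi> \<phi> :: "'a \<Rightarrow> 'a"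
    and D\<psi> D\<phi> :: "'a \<Rightarrow> ('a \<Rightarrow>\<^sub>L 'a)"
    and \<rho> c0 :: real and \<eta>0 :: 'a
  assumes V: "is_domain V" and U: "is_domain U"
    and \<psi>_maps: "\<forall>x\<in>V. \<psi> x \<in> U" and \<phi>_maps: "\<forall>y\<in>U. \<phi> y \<in> V"
    and \<phi>\<psi>: "\<forall>x\<in>V. \<phi> (\<psi> x) = x" and \<psi>\<phi>: "\<forall>y\<in>U. \<psi> (\<phi> y) = y"
    and \<psi>_deriv: "\<forall>x\<in>V. (\<psi> has_derivative blinfun_apply (D\<psi> x)) (at x)"
    and \<psi>_C1: "continuous_on V D\<psi>"
    and \<phi>_deriv: "\<forall>y\<in>U. (\<phi> has_derivative blinfun_apply (D\<phi> y)) (at y)"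
    and \<phi>_C1: "continuous_on U D\<phi>"
    and \<psi>_bdd: "bdd_above ((\<lambda>x. norm (D\<psi> x)) ` V)"
    and \<phi>_bdd: "bdd_above ((\<lambda>y. norm (D\<phi> y)) ` U)"
    and \<rho>_pos: "\<rho> > 0"
    and V\<rho>: "is_domain V\<rho>" "bounded V\<rho>" "V\<rho> \<subseteq> V"
    and U\<rho>: "is_domain U\<rho>" "bounded U\<rho>" "U\<rho> \<subseteq> U"
    and \<psi>_img: "\<psi> ` V\<rho> = U\<rho>"
    and c0_pos: "c0 > 0" and \<eta>0: "\<eta>0 \<in> V\<rho>"
    and balls_V: "V\<rho> \<subseteq> ball \<eta>0 (c0 * \<rho>)"
       "ball \<eta>0 (c0 * \<rho>) \<subseteq> ball \<eta>0 (max 1 ((SUP x\<in>V. norm (D\<psi> x)) + (SUP y\<in>U. norm (D\<phi> y))) * (c0 + 3) * \<rho>)"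
       "ball \<eta>0 (max 1 ((SUP x\<in>V. norm (D\<psi> x)) + (SUP y\<in>U. norm (D\<phi> y))) * (c0 + 3) * \<rho>) \<subseteq> V"
    and balls_U: "U\<rho> \<subseteq> ball (\<psi> \<eta>0) (c0 * \<rho>)"
       "ball (\<psi> \<eta>0) (c0 * \<rho>) \<subseteq> ball (\<psi> \<eta>0) (max 1 ((SUP x\<in>V. norm (D\<psi> x)) + (SUP y\<in>U. norm (D\<phi> y))) * (c0 + 3) * \<rho>)"
       "ball (\<psi> \<eta>0) (max 1 ((SUP x\<in>V. norm (D\<psi> x)) + (SUP y\<in>U. norm (D\<phi> y))) * (c0 + 3) * \<rho>) \<subseteq> U"
  shows "\<exists>C. \<forall>f :: 'a \<Rightarrow> real. in_bmo f \<and> (\<forall>x. x \<notin> V\<rho> \<longrightarrow> f x = 0) \<longrightarrow>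
           in_bmo (\<lambda>y. if y \<in> U\<rho> then f (\<phi> y) else 0) \<and>
           bmo_norm (\<lambda>y. if y \<in> U\<rho> then f (\<phi> y) else 0) \<le> C * bmo_norm f"
proof -
  define K where "K = max 1 ((SUP x\<in>V. norm (D\<psi> x)) + (SUP y\<in>U. norm (D\<phi> y)))"
  define R where "R = K * (c0 + 3) * \<rho>"
  define S where "S = ball (\<psi> \<eta>0) ((c0 + 2) * \<rho>)"
  have K: "1 \<le> K"
    unfolding K_def by simp
  have D\<psi>_le: "norm (D\<psi> x) \<le> K" if "x \<in> V" for x
    unfolding K_def using U that \<psi>_bdd \<phi>_bdd by (intro le_max_one_SUP_add) (auto simp: is_domain_def)
  have D\<phi>_le: "norm (D\<phi> y) \<le> K" if "y \<in> U" for y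
    using le_max_one_SUP_add[OF \<phi>_bdd that \<psi>_bdd] V unfolding K_def by (auto simp: is_domain_def add.commute)
  have "c0 + 2 \<le> 1 * (c0 + 3)" "1 * (c0 + 3) \<le> K * (c0 + 3)"
    using K c0_pos by (auto intro: mult_right_mono)
  then have radius: "(c0 + 2) * \<rho> \<le> R" "K * ((c0 + 2) * \<rho>) \<le> R"
    unfolding R_def using K \<rho>_pos by (auto simp flip: mult.assoc intro!: mult_right_mono)
  have S_U: "S \<subseteq> U"
    using subset_ball[OF radius(1)] balls_U(3) unfolding S_def R_def K_def by blast
  interpret lipschitz_left_inverse \<phi> \<psi> S "ball \<eta>0 R" K
    unfolding S_def
    using balls_U(3) balls_V(3) \<phi>_deriv D\<phi>_le \<psi>_deriv D\<psi>_le \<psi>\<phi> \<phi>\<psi> \<eta>0 V\<rho>(3) K radius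
    unfolding R_def K_def by (intro lipschitz_left_inverse_of_derivative_bounds) auto
  have U\<rho>_S: "U\<rho> \<subseteq> S"
    using balls_U(1) subset_ball[of "c0 * \<rho>" "(c0 + 2) * \<rho>"] \<rho>_pos unfolding S_def by (auto simp: algebra_simps)
  have U\<rho>_sets: "U\<rho> \<in> sets lebesgue"
    using U\<rho> lmeasurable_open by (auto simp: is_domain_def)
  have near: "ball y r \<subseteq> S" if "r \<le> \<rho>" "ball y r \<inter> U\<rho> \<noteq> {}" for y r
    using ball_subset_ball_if_meets[of y r "\<psi> \<eta>0" "c0 * \<rho>" \<rho>] that balls_U(1)
    unfolding S_def by (auto simp: algebra_simps)
  obtain C where C: "\<And>f g. in_bmo f \<Longrightarrow> (\<And>z. z \<in> S \<Longrightarrow> g z = f (\<phi> z))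
                        \<Longrightarrow> (\<And>z. z \<notin> U\<rho> \<Longrightarrow> g z = 0) \<Longrightarrow> in_bmo g \<and> bmo_norm g \<le> C * bmo_norm f"
    using bmo_extension_by_zero[OF \<rho>_pos U\<rho>_S U\<rho>_sets near] by blast
  have pullback: "(if z \<in> U\<rho> then f (\<phi> z) else 0) = f (\<phi> z)"
    if "z \<in> S" and f: "\<forall>x. x \<notin> V\<rho> \<longrightarrow> f x = 0" for z and f :: "'a \<Rightarrow> real"
  proof (cases "z \<in> U\<rho>")
    case False
    have "\<phi> z \<notin> V\<rho>"
    proof
      assume "\<phi> z \<in> V\<rho>"
      then have "\<psi> (\<phi> z) \<in> U\<rho>"
        using \<psi>_img by blast
      then show False
        using False \<psi>\<phi> S_U \<open>z \<in> S\<close> by auto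
    qed
    then show ?thesis
      using False f by simp
  qed simp
  show ?thesis
  proof (intro exI[of _ C] allI impI)
    fix f :: "'a \<Rightarrow> real" assume f: "in_bmo f \<and> (\<forall>x. x \<notin> V\<rho> \<longrightarrow> f x = 0)"
    then show "in_bmo (\<lambda>y. if y \<in> U\<rho> then f (\<phi> y) else 0) \<and>
               bmo_norm (\<lambda>y. if y \<in> U\<rho> then f (\<phi> y) else 0) \<le> C * bmo_norm f"
      using pullback by (intro C) auto
  qed
qed

end
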